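(* Let $\xi>0$ be such that $D^TD-\xi^2I$ is nonsingular. Then $\lambda\in\mathbb{C}$ is an eigenvalue of the operator $\mathcal{L}_{\xi}$ if and only if $-\bar{\lambda}$ is an eigenvalue of $\mathcal{L}_{\xi}$.
   Context: Let $n,m,n_u,n_y$ be positive integers, $A_0,\dots,A_m\in\mathbb{R}^{n\times n}$, $B\in\mathbb{R}^{n\times n_u}$, $C\in\mathbb{R}^{n_y\times n}$, $D\in\mathbb{R}^{n_y\times n_u}$, delays $\tau_1,\dots,\tau_m\geq0$, $\tau_{\max}=\max_i\tau_i$. For $\xi>0$ put $D_\xi=D^TD-\xi^2I_{n_u}$, $\tilde D_\xi=DD^T-\xi^2I_{n_y}$. Define $2n\times2n$ matrices $M_0=\begin{bmatrix} A_0-BD_\xi^{-1}D^TC & -BD_\xi^{-1}B^T\\ \xi^2 C^T\tilde D_\xi^{-1}C & -A_0^T+C^TDD_\xi^{-1}B^T\end{bmatrix}$, $M_i=\begin{bmatrix}A_i&0\\0&0\end{bmatrix}$, $M_{-i}=\begin{bmatrix}0&0\\0&-A_i^T\end{bmatrix}$, $1\le i\le m$. Let $X=\mathcal{C}([-\tau_{\max},\tau_{\max}],\mathbb{C}^{2n})$. The operator $\mathcal{L}_\xi$ on $X$ has domain $\{\phi\in X:\phi'\in X,\ \phi'(0)=M_0\phi(0)+\sum_{i=1}^m(M_i\phi(-\tau_i)+M_{-i}\phi(\tau_i))\}$ and $\mathcal{L}_\xi\phi=\phi'$. An eigenvalue is $\lambda\in\mathbb{C}$ such that $\mathcal{L}_\xi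 u=\lambda u$ for some nonzero $u$ in the domain. *)

theory Defs
  imports "HOL-Analysis.Analysis"
begin

definition cmat :: "real^'c^'r \<Rightarrow> complex^'c^'r" where
  "cmat A = (\<chi> i j. complex_of_real (A $ i $ j))"

text \<open>2x2 block matrix; the index type 'n + 'n models {1..2n}
  (Inl = first n coordinates, Inr = last n coordinates).\<close>
definition blk :: "'a^'n^'n \<Rightarrow> 'a^'n^'n \<Rightarrow> 'a^'n^'n \<Rightarrow> 'a^'n^'n \<Rightarrow> 'a^('n+'n)^('n+'n)" where
  "blk P Q R S = (\<chi> i j. (case i of
      Inl a \<Rightarrow> (case j of Inl b \<Rightarrow> P $ a $ b | Inr b \<Rightarrow> Q $ a $ b)
    | Inr a \<Rightarrow> (case j of Inl b \<Rightarrow> R $ a $ b | Inr b \<Rightarrow> S $ a $ b)))"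

definition Dxi :: "real^'u^'y \<Rightarrow> real \<Rightarrow> real^'u^'u" where
  "Dxi D \<xi> = transpose D ** D - (\<xi>\<^sup>2) *\<^sub>R mat 1"

definition Dtxi :: "real^'u^'y \<Rightarrow> real \<Rightarrow> real^'y^'y" where
  "Dtxi D \<xi> = D ** transpose D - (\<xi>\<^sup>2) *\<^sub>R mat 1"

definition M0 :: "real^'n^'n \<Rightarrow> real^'u^'n \<Rightarrow> real^'n^'y \<Rightarrow> real^'u^'y \<Rightarrow> real
    \<Rightarrow> complex^('n+'n)^('n+'n)" where
  "M0 A0 B C D \<xi> = cmat (blk
      (A0 - B ** matrix_inv (Dxi D \<xi>) ** transpose D ** C)
      (- (B ** matrix_inv (Dxi D \<xi>) ** transpose B))
      ((\<xi>\<^sup>2) *\<^sub>R (transpose C ** matrix_inv (Dtxi D \<xi>) ** C))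
      (- transpose A0 + transpose C ** D ** matrix_inv (Dxi D \<xi>) ** transpose B))"

definition Mpos :: "real^'n^'n \<Rightarrow> complex^('n+'n)^('n+'n)" where
  "Mpos Ai = cmat (blk Ai 0 0 0)"

definition Mneg :: "real^'n^'n \<Rightarrow> complex^('n+'n)^('n+'n)" where
  "Mneg Ai = cmat (blk 0 0 0 (- transpose Ai))"

definition tau_max :: "nat \<Rightarrow> (nat \<Rightarrow> real) \<Rightarrow> real" where
  "tau_max m \<tau> = Max (\<tau> ` {1..m})"

text \<open>A : nat => matrix gives A_0,...,A_m; tau gives tau_1..tau_m.\<close>
definition is_eigenvalue ::
  "nat \<Rightarrow> (nat \<Rightarrow> real^'n^'n) \<Rightarrow> real^'u^'n \<Rightarrow> real^'n^'y \<Rightarrow> real^'u^'y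
   \<Rightarrow> (nat \<Rightarrow> real) \<Rightarrow> real \<Rightarrow> complex \<Rightarrow> bool" where
  "is_eigenvalue m A B C D \<tau> \<xi> lam \<longleftrightarrow>
    (let T = tau_max m \<tau>; I = {-T..T} in
     \<exists>(u :: real \<Rightarrow> complex^('n+'n)) u'.
       continuous_on I u \<and> continuous_on I u' \<and>
       (\<forall>t\<in>I. (u has_vector_derivative u' t) (at t within I)) \<and>
       u' 0 = M0 (A 0) B C D \<xi> *v u 0
              + (\<Sum>i=1..m. Mpos (A i) *v u (- \<tau> i) + Mneg (A i) *v u (\<tau> i)) \<and>
       (\<forall>t\<in>I. u' t = lam *s u t) \<and>
       (\<exists>t\<in>I. u t \<noteq> 0))"

end

theory Submission
  imports Defs
begin

text \<open>
  An eigenfunction of L_xi solves u' = lam u, hence is t |-> exp (lam t) v, and the boundary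
  condition at 0 becomes Delta(lam) v = 0 for the characteristic matrix
  Delta(lam) = lam I - M_0 - sum_k (exp (-lam tau_k) M_k + exp (lam tau_k) M_{-k}).
  So the eigenvalues are the zeros of det Delta, and since all M_i are real,
  det Delta(cnj lam) = cnj (det Delta(lam)).
  With J = [0, I; -I, 0], the matrix M_0 is Hamiltonian, J M_0^T J = M_0 (its off-diagonal blocks
  are symmetric; for the lower one this needs invertibility of DD^T - xi^2 I, which follows from
  that of D^TD - xi^2 I), and J M_k^T J = M_{-k}. Hence J Delta(-lam)^T J = Delta(lam), and
  (det J)^2 = 1 gives det Delta(-lam) = det Delta(lam).
\<close>

lemma transpose_diff: "transpose (X - Y) = transpose X - (transpose Y :: 'a::ab_group_add^'n^'m)"
  by (simp add: vec_eq_iff transpose_def)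

lemma transpose_uminus: "transpose (- X) = - (transpose X :: 'a::ab_group_add^'n^'m)"
  by (simp add: vec_eq_iff transpose_def)

lemma transpose_matrix_inv_symmetric:
  fixes X :: "'a::field^'n^'n"
  assumes "invertible X" "transpose X = X"
  shows "transpose (matrix_inv X) = matrix_inv X"
proof -
  have inverse: "X ** matrix_inv X = mat 1" "matrix_inv X ** X = mat 1"
    using someI_ex [OF assms(1) [unfolded invertible_def]] by (simp_all add: matrix_inv_def)
  have "X ** transpose (matrix_inv X) = mat 1"
    using inverse(2) assms(2) by (metis matrix_transpose_mul transpose_mat)
  then have "matrix_inv X ** (X ** transpose (matrix_inv X)) = matrix_inv X"
    by simp
  then show ?thesis
    using inverse(2) by (simp add: matrix_mul_assoc)
qed

lemma det_map_cnj: "det (\<chi> i j. cnj (X $ i $ j)) = cnj (det X)"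
  by (simp add: det_def)

lemma det_eq_0_iff_nontrivial_kernel:
  "det X = 0 \<longleftrightarrow> (\<exists>v. v \<noteq> 0 \<and> X *v v = 0)" for X :: "'a::field^'n^'n"
  by (metis invertible_det_nz invertible_left_inverse matrix_left_invertible_ker)

lemma sum_UNIV_Plus:
  "(\<Sum>k\<in>UNIV. f k) = (\<Sum>a\<in>UNIV. f (Inl a)) + (\<Sum>b\<in>UNIV. f (Inr b :: 'a::finite + 'b::finite))"
  by (subst UNIV_Plus_UNIV [symmetric], subst sum.Plus) (simp_all add: o_def)

definition symplectic_form :: "'a::ring_1^('n::finite+'n)^('n+'n)" where
  "symplectic_form = blk 0 (mat 1) (- mat 1) 0"

lemma symplectic_congruence_nth:
  fixes X :: "'a::comm_ring_1^('n::finite+'n)^('n+'n)"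
  defines "Y \<equiv> symplectic_form ** transpose X ** symplectic_form"
  shows "Y $ Inl a $ Inl b = - X $ Inr b $ Inr a"
    and "Y $ Inl a $ Inr b = X $ Inl b $ Inr a"
    and "Y $ Inr a $ Inl b = X $ Inr b $ Inl a"
    and "Y $ Inr a $ Inr b = - X $ Inl b $ Inl a"
  unfolding Y_def symplectic_form_def
  by (simp_all add: matrix_matrix_mult_def sum_UNIV_Plus blk_def mat_def transpose_def
      if_distrib if_distribR sum.delta cong: if_cong)

lemma symplectic_form_squared:
  "symplectic_form ** symplectic_form = (- mat 1 :: 'a::comm_ring_1^('n::finite+'n)^('n+'n))"
proof -
  have "(symplectic_form ** transpose (mat 1) ** symplectic_form) $ i $ j = (- mat 1 :: 'a^_^_) $ i $ j"
    for i j :: "'n + 'n"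
    by (cases i; cases j) (auto simp: symplectic_congruence_nth mat_def)
  then show ?thesis
    by (simp add: vec_eq_iff)
qed

lemma det_symplectic_form_squared:
  "det (symplectic_form :: 'a::comm_ring_1^('n::finite+'n)^('n+'n)) ^ 2 = 1"
  (is "det ?J ^ 2 = 1")
proof -
  have "CARD('n + 'n) = 2 * CARD('n)"
    using card_Plus [of "UNIV :: 'n set" "UNIV :: 'n set"] by simp
  then have "det (- mat 1 :: 'a^('n+'n)^('n+'n)) = 1"
    by (simp add: det_diagonal mat_def power_mult)
  moreover have "det ?J ^ 2 = det (?J ** ?J)"
    by (simp add: det_mul power2_eq_square)
  ultimately show ?thesis
    by (simp add: symplectic_form_squared)
qed

lemma det_symplectic_congruence:
  fixes X :: "'a::comm_ring_1^('n::finite+'n)^('n+'n)"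
  shows "det (symplectic_form ** transpose X ** symplectic_form) = det X"
proof -
  have "det (symplectic_form ** transpose X ** symplectic_form) =
          det (symplectic_form :: 'a^('n+'n)^('n+'n)) ^ 2 * det X"
    by (simp add: det_mul det_transpose power2_eq_square ac_simps)
  then show ?thesis
    by (simp add: det_symplectic_form_squared)
qed

text \<open>Equivalent to the usual symmetry of \<open>J X\<close>, because \<open>J\<^sup>2 = -1\<close>.\<close>

definition hamiltonian :: "'a::comm_ring_1^('n::finite+'n)^('n+'n) \<Rightarrow> bool" where
  "hamiltonian X \<longleftrightarrow> symplectic_form ** transpose X ** symplectic_form = X"

lemma symplectic_congruence_cmat_blk:
  "symplectic_form ** transpose (cmat (blk P Q R S)) ** symplectic_form =
     cmat (blk (- transpose S) (transpose Q) (transpose R) (- transpose P))"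
proof -
  have "(symplectic_form ** transpose (cmat (blk P Q R S)) ** symplectic_form) $ i $ j =
          cmat (blk (- transpose S) (transpose Q) (transpose R) (- transpose P)) $ i $ j" for i j
    by (cases i; cases j)
      (simp_all add: symplectic_congruence_nth, simp_all add: cmat_def blk_def transpose_def)
  then show ?thesis
    by (simp add: vec_eq_iff)
qed

lemma invertible_Dtxi:
  assumes "invertible (Dxi D \<xi>)" "\<xi> \<noteq> 0"
  shows "invertible (Dtxi D \<xi>)"
proof -
  have "x = 0" if x: "Dtxi D \<xi> *v x = 0" for x
  proof -
    have DDt: "D *v (transpose D *v x) = \<xi>\<^sup>2 *\<^sub>R x"
      using x unfolding Dtxi_def
      by (simp add: matrix_vector_mult_diff_rdistrib matrix_vector_mul_assoc
          scaleR_matrix_vector_assoc [symmetric] del: transpose_matrix_vector)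
    have "Dxi D \<xi> *v (transpose D *v x) = 0"
      unfolding Dxi_def using DDt
      by (simp add: matrix_vector_mult_diff_rdistrib matrix_vector_mul_assoc [symmetric]
          scaleR_matrix_vector_assoc [symmetric] matrix_scaleR_vector_ac [symmetric]
          matrix_vector_mult_scaleR del: transpose_matrix_vector)
    then have "transpose D *v x = 0"
      using assms(1) by (metis invertible_left_inverse matrix_left_invertible_ker)
    then show "x = 0"
      using DDt assms(2) by simp
  qed
  then show ?thesis
    by (metis invertible_left_inverse matrix_left_invertible_ker)
qed

lemma M0_hamiltonian:
  assumes "invertible (Dxi D \<xi>)" "\<xi> \<noteq> 0"
  shows "hamiltonian (M0 A0 B C D \<xi>)"
proof -
  have "transpose (Dxi D \<xi>) = Dxi D \<xi>" "transpose (Dtxi D \<xi>) = Dtxi D \<xi>"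
    by (simp_all add: Dxi_def Dtxi_def transpose_diff transpose_scalar matrix_transpose_mul)
  then have "transpose (matrix_inv (Dxi D \<xi>)) = matrix_inv (Dxi D \<xi>)"
    "transpose (matrix_inv (Dtxi D \<xi>)) = matrix_inv (Dtxi D \<xi>)"
    using assms invertible_Dtxi transpose_matrix_inv_symmetric by blast+
  then show ?thesis
    unfolding hamiltonian_def M0_def symplectic_congruence_cmat_blk
    by (simp add: transpose_diff transpose_uminus transpose_scalar matrix_transpose_mul matrix_mul_assoc)
qed

lemma has_vector_derivative_exp_scale:
  fixes w :: "complex^'k"
  shows "((\<lambda>t. exp (lam * of_real t) *s w) has_vector_derivative
            lam *s (exp (lam * of_real t) *s w)) (at t within S)"
proof -
  have "bounded_linear (\<lambda>z. z *s w)"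
    by (rule bounded_linearI') (simp_all add: vec_eq_iff algebra_simps)
  moreover have "((\<lambda>t. exp (lam * of_real t)) has_vector_derivative lam * exp (lam * of_real t))
                   (at t within S)"
    by (rule has_vector_derivative_real_field) (auto intro!: derivative_eq_intros)
  ultimately show ?thesis
    using bounded_linear.has_vector_derivative by (fastforce simp: vector_smult_assoc)
qed

lemma continuous_on_exp_scale:
  fixes w :: "complex^'k"
  shows "continuous_on S (\<lambda>t. exp (lam * of_real t) *s w)"
  using has_vector_derivative_continuous [OF has_vector_derivative_exp_scale]
  by (blast intro: continuous_at_imp_continuous_on)

lemma linear_ode_exp_solution:
  fixes u :: "real \<Rightarrow> complex^'k"
  assumes S: "convex S" "0 \<in> S" "t \<in> S"
    and deriv: "\<And>s. s \<in> S \<Longrightarrow> (u has_vector_derivative lam *s u s) (at s within S)"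
  shows "u t = exp (lam * of_real t) *s u 0"
proof -
  have "u t $ i = exp (lam * of_real t) * u 0 $ i" for i
  proof -
    have "((\<lambda>s. exp (- (lam * of_real s)) * u s $ i) has_derivative (\<lambda>_. 0)) (at s within S)"
      if "s \<in> S" for s
    proof -
      have "((\<lambda>s. exp (- (lam * of_real s))) has_vector_derivative exp (- (lam * of_real s)) * - lam)
              (at s within S)"
        by (rule has_vector_derivative_real_field) (auto intro!: derivative_eq_intros)
      moreover have "((\<lambda>s. u s $ i) has_vector_derivative lam * u s $ i) (at s within S)"
        using bounded_linear.has_vector_derivative [OF bounded_linear_vec_nth deriv [OF that]] by simp
      ultimately have "((\<lambda>s. exp (- (lam * of_real s)) * u s $ i) has_vector_derivative
          exp (- (lam * of_real s)) * (lam * u s $ i) + exp (- (lam * of_real s)) * - lam * u s $ i)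
          (at s within S)"
        by (rule has_vector_derivative_mult)
      then show ?thesis
        by (simp add: has_vector_derivative_def)
    qed
    then have "\<exists>c. \<forall>s\<in>S. exp (- (lam * of_real s)) * u s $ i = c"
      by (rule has_derivative_zero_constant [OF S(1)])
    then obtain c where c: "\<And>s. s \<in> S \<Longrightarrow> exp (- (lam * of_real s)) * u s $ i = c"
      by blast
    have "u t $ i = exp (lam * of_real t) * (exp (- (lam * of_real t)) * u t $ i)"
      by (simp add: exp_minus_inverse flip: mult.assoc)
    also have "\<dots> = exp (lam * of_real t) * u 0 $ i"
      using c [OF S(3)] c [OF S(2)] by simp
    finally show ?thesis .
  qed
  then show ?thesis
    by (simp add: vec_eq_iff)
qed

lemma delay_mem_interval:
  assumes "\<forall>i\<in>{1..m}. \<tau> i \<ge> 0" "k \<in> {1..m}"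
  shows "\<tau> k \<in> {- tau_max m \<tau>..tau_max m \<tau>}" "- \<tau> k \<in> {- tau_max m \<tau>..tau_max m \<tau>}"
proof -
  have "\<tau> k \<le> tau_max m \<tau>"
    unfolding tau_max_def using assms(2) by (intro Max_ge) simp_all
  moreover have "0 \<le> \<tau> k"
    using assms by blast
  ultimately show "\<tau> k \<in> {- tau_max m \<tau>..tau_max m \<tau>}" "- \<tau> k \<in> {- tau_max m \<tau>..tau_max m \<tau>}"
    by simp_all
qed

lemma zero_mem_interval:
  assumes "m \<ge> 1" "\<forall>i\<in>{1..m}. \<tau> i \<ge> 0"
  shows "0 \<in> {- tau_max m \<tau>..tau_max m \<tau>}"
  using delay_mem_interval [OF assms(2), of 1] assms(1) by simp

context
  fixes m :: nat and A :: "nat \<Rightarrow> real^'n::finite^'n"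
    and B :: "real^'u::finite^'n" and C :: "real^'n^'y::finite" and D :: "real^'u^'y"
    and \<tau> :: "nat \<Rightarrow> real" and \<xi> :: real
begin

text \<open>Written entrywise, as complex matrices carry no complex scalar multiplication.\<close>

definition char_matrix :: "complex \<Rightarrow> complex^('n+'n)^('n+'n)" where
  "char_matrix lam = (\<chi> i j. (if i = j then lam else 0) - M0 (A 0) B C D \<xi> $ i $ j
     - (\<Sum>k=1..m. exp (- lam * \<tau> k) * Mpos (A k) $ i $ j + exp (lam * \<tau> k) * Mneg (A k) $ i $ j))"

lemma char_matrix_cnj: "char_matrix (cnj lam) = (\<chi> i j. cnj (char_matrix lam $ i $ j))"
  by (simp add: vec_eq_iff char_matrix_def M0_def Mpos_def Mneg_def cmat_def exp_cnj)

lemma char_matrix_uminus: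
  assumes "invertible (Dxi D \<xi>)" "\<xi> \<noteq> 0"
  shows "symplectic_form ** transpose (char_matrix (- lam)) ** symplectic_form = char_matrix lam"
proof -
  let ?M0 = "M0 (A 0) B C D \<xi>"
  have "(symplectic_form ** transpose ?M0 ** symplectic_form) $ i $ j = ?M0 $ i $ j" for i j
    using M0_hamiltonian [OF assms, of "A 0" B C] by (simp add: hamiltonian_def)
  then have M0_nth: "?M0 $ Inr b $ Inr a = - ?M0 $ Inl a $ Inl b"
    "?M0 $ Inl b $ Inr a = ?M0 $ Inl a $ Inr b"
    "?M0 $ Inr b $ Inl a = ?M0 $ Inr a $ Inl b" for a b
    by (metis symplectic_congruence_nth minus_minus)+
  have "(symplectic_form ** transpose (char_matrix (- lam)) ** symplectic_form) $ i $ j =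
          char_matrix lam $ i $ j" for i j
    by (cases i; cases j)
      (simp_all add: symplectic_congruence_nth, simp_all add: char_matrix_def M0_nth Mpos_def Mneg_def
        cmat_def blk_def transpose_def sum_negf)
  then show ?thesis
    by (simp add: vec_eq_iff)
qed

lemma det_char_matrix_cnj: "det (char_matrix (cnj lam)) = cnj (det (char_matrix lam))"
  by (simp add: char_matrix_cnj det_map_cnj)

lemma det_char_matrix_uminus:
  assumes "invertible (Dxi D \<xi>)" "\<xi> \<noteq> 0"
  shows "det (char_matrix (- lam)) = det (char_matrix lam)"
  by (metis char_matrix_uminus [OF assms] det_symplectic_congruence)

lemma char_matrix_mult_vec:
  "char_matrix lam *v v = lam *s v - (M0 (A 0) B C D \<xi> *v v
     + (\<Sum>k=1..m. Mpos (A k) *v (exp (- lam * \<tau> k) *s v) + Mneg (A k) *v (exp (lam * \<tau> k) *s v)))"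
proof -
  have "(\<Sum>j\<in>UNIV. (if i = j then lam else 0) * v $ j) = lam * v $ i" for i
    by (simp add: if_distrib [of "\<lambda>x. x * _"] cong: if_cong)
  then show ?thesis
    by (simp add: vec_eq_iff char_matrix_def matrix_vector_mult_def ring_distribs
        sum_subtractf sum.distrib sum_distrib_left sum_component sum.swap [of _ UNIV] mult_ac)
qed

context
  assumes m_pos: "m \<ge> 1" and delays_nonneg: "\<forall>i\<in>{1..m}. \<tau> i \<ge> 0"
begin

lemma is_eigenvalue_imp_det_char_matrix:
  assumes "is_eigenvalue m A B C D \<tau> \<xi> lam"
  shows "det (char_matrix lam) = 0"
proof -
  define I where "I = {- tau_max m \<tau>..tau_max m \<tau>}"
  obtain u u' where deriv: "\<forall>t\<in>I. (u has_vector_derivative u' t) (at t within I)"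
    and boundary: "u' 0 = M0 (A 0) B C D \<xi> *v u 0
              + (\<Sum>i=1..m. Mpos (A i) *v u (- \<tau> i) + Mneg (A i) *v u (\<tau> i))"
    and eigen: "\<forall>t\<in>I. u' t = lam *s u t" and nonzero: "\<exists>t\<in>I. u t \<noteq> 0"
    using assms unfolding is_eigenvalue_def Let_def I_def [symmetric] by (elim exE conjE) (rule that)
  define v where "v = u 0"
  have "0 \<in> I"
    using zero_mem_interval [OF m_pos delays_nonneg] by (simp add: I_def)
  have "convex I"
    by (simp add: I_def)
  moreover have "\<And>t. t \<in> I \<Longrightarrow> (u has_vector_derivative lam *s u t) (at t within I)"
    using deriv eigen by simp
  ultimately have u_exp: "u t = exp (lam * of_real t) *s v" if "t \<in> I" for t
    unfolding v_def using \<open>0 \<in> I\<close> that by (intro linear_ode_exp_solution)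
  then have "v \<noteq> 0"
    using nonzero by force
  moreover have "char_matrix lam *v v = 0"
  proof -
    have "(\<Sum>i=1..m. Mpos (A i) *v u (- \<tau> i) + Mneg (A i) *v u (\<tau> i)) =
          (\<Sum>i=1..m. Mpos (A i) *v (exp (- lam * \<tau> i) *s v) + Mneg (A i) *v (exp (lam * \<tau> i) *s v))"
    proof (rule sum.cong [OF refl])
      fix k assume "k \<in> {1..m}"
      then have "\<tau> k \<in> I" "- \<tau> k \<in> I"
        unfolding I_def by (rule delay_mem_interval [OF delays_nonneg])+
      then show "Mpos (A k) *v u (- \<tau> k) + Mneg (A k) *v u (\<tau> k) =
          Mpos (A k) *v (exp (- lam * \<tau> k) *s v) + Mneg (A k) *v (exp (lam * \<tau> k) *s v)"
        by (simp add: u_exp)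
    qed
    moreover have "u 0 = v" "u' 0 = lam *s v"
      using eigen \<open>0 \<in> I\<close> by (simp_all add: v_def)
    ultimately show ?thesis
      using boundary by (simp add: char_matrix_mult_vec)
  qed
  ultimately show ?thesis
    using det_eq_0_iff_nontrivial_kernel by blast
qed

lemma det_char_matrix_imp_is_eigenvalue:
  assumes "det (char_matrix lam) = 0"
  shows "is_eigenvalue m A B C D \<tau> \<xi> lam"
proof -
  define I where "I = {- tau_max m \<tau>..tau_max m \<tau>}"
  obtain v where "v \<noteq> 0" and kernel: "char_matrix lam *v v = 0"
    using assms det_eq_0_iff_nontrivial_kernel by blast
  define u where "u = (\<lambda>t. exp (lam * of_real t) *s v)"
  define u' where "u' = (\<lambda>t. exp (lam * of_real t) *s (lam *s v))"
  have eigen: "u' t = lam *s u t" for t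
    by (simp add: u_def u'_def vector_smult_assoc mult.commute)
  have "(u has_vector_derivative u' t) (at t within I)" for t
    unfolding eigen unfolding u_def by (rule has_vector_derivative_exp_scale)
  moreover have "continuous_on I u" "continuous_on I u'"
    unfolding u_def u'_def by (rule continuous_on_exp_scale)+
  moreover have "u' 0 = M0 (A 0) B C D \<xi> *v u 0
      + (\<Sum>i=1..m. Mpos (A i) *v u (- \<tau> i) + Mneg (A i) *v u (\<tau> i))"
    using kernel by (simp add: u_def u'_def char_matrix_mult_vec)
  moreover have "0 \<in> I" "u 0 \<noteq> 0"
    using zero_mem_interval [OF m_pos delays_nonneg] \<open>v \<noteq> 0\<close> by (simp_all add: I_def u_def)
  ultimately show ?thesis
    unfolding is_eigenvalue_def Let_def I_def [symmetric] using eigen by blast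
qed

lemma is_eigenvalue_iff_det_char_matrix:
  "is_eigenvalue m A B C D \<tau> \<xi> lam \<longleftrightarrow> det (char_matrix lam) = 0"
  using is_eigenvalue_imp_det_char_matrix det_char_matrix_imp_is_eigenvalue by blast

end

end

theorem proposition1:
  fixes m :: nat
    and A :: "nat \<Rightarrow> real^'n^'n"
    and B :: "real^'u^'n" and C :: "real^'n^'y" and D :: "real^'u^'y"
    and \<tau> :: "nat \<Rightarrow> real" and \<xi> :: real and lam :: complex
  assumes "m \<ge> 1"
    and "\<forall>i\<in>{1..m}. \<tau> i \<ge> 0"
    and "\<xi> > 0"
    and "invertible (Dxi D \<xi>)"
  shows "is_eigenvalue m A B C D \<tau> \<xi> lam \<longleftrightarrow> is_eigenvalue m A B C D \<tau> \<xi> (- cnj lam)"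
proof -
  let ?\<Delta> = "char_matrix m A B C D \<tau> \<xi>"
  have "is_eigenvalue m A B C D \<tau> \<xi> lam \<longleftrightarrow> det (?\<Delta> lam) = 0"
    using assms(1,2) by (rule is_eigenvalue_iff_det_char_matrix)
  also have "\<dots> \<longleftrightarrow> det (?\<Delta> (cnj lam)) = 0"
    by (simp add: det_char_matrix_cnj)
  also have "\<dots> \<longleftrightarrow> det (?\<Delta> (- cnj lam)) = 0"
    using assms(3,4) by (simp add: det_char_matrix_uminus)
  also have "\<dots> \<longleftrightarrow> is_eigenvalue m A B C D \<tau> \<xi> (- cnj lam)"
    using assms(1,2) by (rule is_eigenvalue_iff_det_char_matrix [symmetric])
  finally show ?thesis .
qed

end
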